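(* Fix $\mathcal D>0$ and let $J(N,\widetilde D)$ be a twice continuously differentiable real function of $N>0$, $\widetilde D>0$. For $T>0$ consider $$\min_{N>0,\ \widetilde D\ge 2\mathcal D} J(N,\widetilde D)\quad\text{subject to}\quad N\widetilde D=T .$$ Let $I\subseteq(0,\infty)$ be an open interval and assume that for every $T\in I$ this problem has a unique minimizer $(N^\star(T),\widetilde D^\star(T))$ with $\widetilde D^\star(T)>2\mathcal D$, and that $T\mapsto (N^\star(T),\widetilde D^\star(T))$ is continuous on $I$. Writing $\mu=\log N$, $\nu=\log\widetilde D$ and $J(\mu,\nu):=J(e^\mu,e^\nu)$, assume that at every such optimum $(\mu^\star(T),\nu^\star(T))$: (1) $\partial^2 J/\partial\mu\partial\nu\le 0$; (2) $\partial^2J/\partial\mu^2>0$; (3) $\partial^2J/\partial\nu^2>0$. Then for all $T_1<T_2$ in $I$: $N^\star(T_2)>N^\star(T_1)$ and $\widetilde D^\star(T_2)>\widetilde D^\star(T_1)$.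
   Context: In the paper's application, $N$ is the model size, $D$ the number of training tokens, $\widetilde D=6D+2\mathcal D$ the effective data with $\mathcal D$ the test-set size, and $J$ the two-part code length; the claim is purely analytic. *)

theory Defs
  imports "HOL-Analysis.Analysis"
begin

definition C2_on :: "(real \<times> real) set \<Rightarrow> (real \<times> real \<Rightarrow> real) \<Rightarrow> bool" where
  "C2_on S f \<longleftrightarrow>
     (\<exists>f' :: real \<times> real \<Rightarrow> ((real \<times> real) \<Rightarrow>\<^sub>L real).
      \<exists>f'' :: real \<times> real \<Rightarrow> ((real \<times> real) \<Rightarrow>\<^sub>L ((real \<times> real) \<Rightarrow>\<^sub>L real)).
        (\<forall>x\<in>S. (f has_derivative blinfun_apply (f' x)) (at x)) \<and>
        (\<forall>x\<in>S. (f' has_derivative blinfun_apply (f'' x)) (at x)) \<and>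
        continuous_on S f'')"

definition Jlog :: "(real \<Rightarrow> real \<Rightarrow> real) \<Rightarrow> real \<Rightarrow> real \<Rightarrow> real" where
  "Jlog J \<mu> \<nu> = J (exp \<mu>) (exp \<nu>)"

definition d2_mu_mu :: "(real \<Rightarrow> real \<Rightarrow> real) \<Rightarrow> real \<Rightarrow> real \<Rightarrow> real" where
  "d2_mu_mu J \<mu> \<nu> = deriv (\<lambda>m. deriv (\<lambda>m'. Jlog J m' \<nu>) m) \<mu>"

definition d2_nu_nu :: "(real \<Rightarrow> real \<Rightarrow> real) \<Rightarrow> real \<Rightarrow> real \<Rightarrow> real" where
  "d2_nu_nu J \<mu> \<nu> = deriv (\<lambda>n. deriv (\<lambda>n'. Jlog J \<mu> n') n) \<nu>"

definition d2_mu_nu :: "(real \<Rightarrow> real \<Rightarrow> real) \<Rightarrow> real \<Rightarrow> real \<Rightarrow> real" where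
  "d2_mu_nu J \<mu> \<nu> = deriv (\<lambda>n. deriv (\<lambda>m. Jlog J m n) \<mu>) \<nu>"

end

theory Submission
  imports Defs
begin

text \<open>
  In log coordinates \<open>\<mu> = ln N\<close>, \<open>\<nu> = ln D\<close> the constraint \<open>N D = T\<close> is the line \<open>\<mu> + \<nu> = ln T\<close>.
  Since \<open>Dstar T > 2\<D>\<close> the constraint \<open>D \<ge> 2\<D>\<close> is slack at the minimizer, so the optimum
  \<open>p T = (\<mu>*, \<nu>*)\<close> is a stationary point of \<open>J\<close> along that line:
  \<open>H (p T) = 0\<close> for \<open>H = \<partial>\<^sub>\<mu>J - \<partial>\<^sub>\<nu>J\<close>.
  The hypotheses say that \<open>\<partial>\<^sub>\<mu>H = J\<^sub>\<mu>\<^sub>\<mu> - J\<^sub>\<mu>\<^sub>\<nu> > 0\<close> and \<open>\<partial>\<^sub>\<nu>H = J\<^sub>\<mu>\<^sub>\<nu> - J\<^sub>\<nu>\<^sub>\<nu> < 0\<close> at the optimum,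
  hence on a ball around it. On such a ball every point of the level set \<open>H = 0\<close> with larger
  \<open>\<mu> + \<nu>\<close> has both coordinates larger: otherwise \<open>H\<close> would be strictly monotone along the segment
  joining the two points. Continuity of \<open>p\<close> makes \<open>\<mu>*\<close> and \<open>\<nu>*\<close> locally increasing to the right,
  and a maximum argument on \<open>[T\<^sub>1, T\<^sub>2]\<close> makes them increasing.
\<close>

section \<open>Partial derivatives of functions of two real variables\<close>

lemma linear_real_pair_expand:
  fixes D :: "real \<times> real \<Rightarrow> real"
  assumes "linear D"
  shows "D h = fst h * D (1, 0) + snd h * D (0, 1)"
proof -
  have "h = fst h *\<^sub>R (1, 0) + snd h *\<^sub>R (0, 1)" by simp
  then have "D h = D (fst h *\<^sub>R (1, 0)) + D (snd h *\<^sub>R (0, 1))"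
    by (metis assms linear_add)
  then show ?thesis by (simp only: linear_scale[OF assms] real_scaleR_def)
qed

lemma has_derivative_real_pair_partials:
  fixes g :: "real \<times> real \<Rightarrow> real"
  assumes "(g has_derivative D) (at p)"
  shows "(g has_derivative (\<lambda>h. fst h * D (1, 0) + snd h * D (0, 1))) (at p)"
proof -
  have "D = (\<lambda>h. fst h * D (1, 0) + snd h * D (0, 1))"
    using linear_real_pair_expand has_derivative_linear[OF assms] by blast
  then show ?thesis using assms by simp
qed

definition has_partials_on ::
    "(real \<times> real) set \<Rightarrow> (real \<times> real \<Rightarrow> real) \<Rightarrow> (real \<times> real \<Rightarrow> real) \<Rightarrow> (real \<times> real \<Rightarrow> real) \<Rightarrow> bool"
  where "has_partials_on S g g\<^sub>1 g\<^sub>2 \<longleftrightarrow>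
    (\<forall>p\<in>S. (g has_derivative (\<lambda>h. fst h * g\<^sub>1 p + snd h * g\<^sub>2 p)) (at p))"

lemma has_partials_on_cong:
  assumes "\<And>p. p \<in> S \<Longrightarrow> g\<^sub>1 p = g\<^sub>1' p" "\<And>p. p \<in> S \<Longrightarrow> g\<^sub>2 p = g\<^sub>2' p"
  shows "has_partials_on S g g\<^sub>1 g\<^sub>2 \<longleftrightarrow> has_partials_on S g g\<^sub>1' g\<^sub>2'"
  using assms by (simp add: has_partials_on_def)

lemma has_partials_on_diff:
  assumes "has_partials_on S f f\<^sub>1 f\<^sub>2" "has_partials_on S g g\<^sub>1 g\<^sub>2"
  shows "has_partials_on S (\<lambda>p. f p - g p) (\<lambda>p. f\<^sub>1 p - g\<^sub>1 p) (\<lambda>p. f\<^sub>2 p - g\<^sub>2 p)"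
  using assms unfolding has_partials_on_def
  by (auto intro!: has_derivative_eq_rhs[OF has_derivative_diff] simp: algebra_simps)

lemma has_partials_on_mult:
  assumes "has_partials_on S f f\<^sub>1 f\<^sub>2" "has_partials_on S g g\<^sub>1 g\<^sub>2"
  shows "has_partials_on S (\<lambda>p. f p * g p)
    (\<lambda>p. f\<^sub>1 p * g p + f p * g\<^sub>1 p) (\<lambda>p. f\<^sub>2 p * g p + f p * g\<^sub>2 p)"
  using assms unfolding has_partials_on_def
  by (auto intro!: has_derivative_eq_rhs[OF has_derivative_mult] simp: algebra_simps)

lemma has_partials_on_DERIV_comp:
  assumes "has_partials_on S g g\<^sub>1 g\<^sub>2" "(X s, Y s) \<in> S"
    and "(X has_real_derivative X') (at s)" "(Y has_real_derivative Y') (at s)"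
  shows "((\<lambda>s. g (X s, Y s)) has_real_derivative X' * g\<^sub>1 (X s, Y s) + Y' * g\<^sub>2 (X s, Y s)) (at s)"
proof -
  have "((\<lambda>s. (X s, Y s)) has_derivative (\<lambda>h. (X' * h, Y' * h))) (at s)"
    using assms(3,4) unfolding has_field_derivative_def by (intro has_derivative_Pair) auto
  moreover have "(g has_derivative (\<lambda>h. fst h * g\<^sub>1 (X s, Y s) + snd h * g\<^sub>2 (X s, Y s))) (at (X s, Y s))"
    using assms(1,2) unfolding has_partials_on_def by blast
  ultimately have "((\<lambda>s. g (X s, Y s)) has_derivative
      (\<lambda>h. X' * h * g\<^sub>1 (X s, Y s) + Y' * h * g\<^sub>2 (X s, Y s))) (at s)"
    using has_derivative_compose by fastforce
  then show ?thesis unfolding has_field_derivative_def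
    by (rule has_derivative_eq_rhs) (auto simp: algebra_simps)
qed

lemma has_partials_on_DERIV_fst:
  assumes "has_partials_on S g g\<^sub>1 g\<^sub>2" "(x, y) \<in> S"
  shows "((\<lambda>u. g (u, y)) has_real_derivative g\<^sub>1 (x, y)) (at x)"
  using has_partials_on_DERIV_comp[OF assms(1), of "\<lambda>u. u" x "\<lambda>_. y", OF assms(2) DERIV_ident DERIV_const]
  by simp

lemma has_partials_on_DERIV_snd:
  assumes "has_partials_on S g g\<^sub>1 g\<^sub>2" "(x, y) \<in> S"
  shows "((\<lambda>v. g (x, v)) has_real_derivative g\<^sub>2 (x, y)) (at y)"
  using has_partials_on_DERIV_comp[OF assms(1), of "\<lambda>_. x" y "\<lambda>v. v", OF assms(2) DERIV_const DERIV_ident]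
  by simp

lemma has_partials_on_imp_continuous_on:
  "has_partials_on S g g\<^sub>1 g\<^sub>2 \<Longrightarrow> continuous_on S g"
  unfolding has_partials_on_def
  by (meson continuous_at_imp_continuous_on has_derivative_continuous)

lemma has_partials_on_exp_fst: "has_partials_on UNIV (\<lambda>q. exp (fst q)) (\<lambda>q. exp (fst q)) (\<lambda>q. 0)"
  unfolding has_partials_on_def by (auto intro!: derivative_eq_intros)

lemma has_partials_on_exp_snd: "has_partials_on UNIV (\<lambda>q. exp (snd q)) (\<lambda>q. 0) (\<lambda>q. exp (snd q))"
  unfolding has_partials_on_def by (auto intro!: derivative_eq_intros)

lemma has_partials_on_comp_exp:
  assumes "has_partials_on S g g\<^sub>1 g\<^sub>2" "\<And>q. (exp (fst q), exp (snd q)) \<in> S"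
  shows "has_partials_on UNIV (\<lambda>q. g (exp (fst q), exp (snd q)))
    (\<lambda>q. exp (fst q) * g\<^sub>1 (exp (fst q), exp (snd q))) (\<lambda>q. exp (snd q) * g\<^sub>2 (exp (fst q), exp (snd q)))"
  unfolding has_partials_on_def
proof
  fix q :: "real \<times> real"
  have "((\<lambda>q. (exp (fst q), exp (snd q))) has_derivative
      (\<lambda>h. (exp (fst q) * fst h, exp (snd q) * snd h))) (at q)"
    by (auto intro!: derivative_eq_intros)
  moreover have "(g has_derivative (\<lambda>h. fst h * g\<^sub>1 (exp (fst q), exp (snd q)) + snd h * g\<^sub>2 (exp (fst q), exp (snd q))))
      (at (exp (fst q), exp (snd q)))"
    using assms unfolding has_partials_on_def by blast
  ultimately have "((\<lambda>q. g (exp (fst q), exp (snd q))) has_derivative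
      (\<lambda>h. fst (exp (fst q) * fst h, exp (snd q) * snd h) * g\<^sub>1 (exp (fst q), exp (snd q))
        + snd (exp (fst q) * fst h, exp (snd q) * snd h) * g\<^sub>2 (exp (fst q), exp (snd q))))
      (at q)"
    by (rule has_derivative_compose)
  then show "((\<lambda>q. g (exp (fst q), exp (snd q))) has_derivative
      (\<lambda>h. fst h * (exp (fst q) * g\<^sub>1 (exp (fst q), exp (snd q))) + snd h * (exp (snd q) * g\<^sub>2 (exp (fst q), exp (snd q)))))
      (at q)"
    by (rule has_derivative_eq_rhs) (simp add: fun_eq_iff)
qed

section \<open>Symmetry of mixed partial derivatives\<close>

lemma mixed_partials_meet_on_square:
  assumes g: "has_partials_on S g g\<^sub>1 g\<^sub>2"
    and g\<^sub>1: "has_partials_on S g\<^sub>1 g\<^sub>1\<^sub>1 g\<^sub>1\<^sub>2" and g\<^sub>2: "has_partials_on S g\<^sub>2 g\<^sub>2\<^sub>1 g\<^sub>2\<^sub>2"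
    and s: "s > 0" and square: "{x..x+s} \<times> {y..y+s} \<subseteq> S"
  shows "\<exists>a\<in>{x..x+s} \<times> {y..y+s}. \<exists>b\<in>{x..x+s} \<times> {y..y+s}. g\<^sub>1\<^sub>2 a = g\<^sub>2\<^sub>1 b"
proof -
  have inS: "(u, v) \<in> S" if "x \<le> u" "u \<le> x + s" "y \<le> v" "v \<le> y + s" for u v
    using square that by auto
  define \<Delta> where "\<Delta> = g (x+s, y+s) - g (x+s, y) - g (x, y+s) + g (x, y)"
  have "\<exists>u. x < u \<and> u < x + s \<and>
      g (x+s, y+s) - g (x+s, y) - (g (x, y+s) - g (x, y)) = (x + s - x) * (g\<^sub>1 (u, y+s) - g\<^sub>1 (u, y))"
    by (rule MVT2) (use s in \<open>auto intro!: DERIV_diff has_partials_on_DERIV_fst[OF g] inS\<close>)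
  then obtain u where u: "x < u" "u < x + s" "\<Delta> = s * (g\<^sub>1 (u, y+s) - g\<^sub>1 (u, y))"
    by (auto simp: \<Delta>_def)
  have "\<exists>v. y < v \<and> v < y + s \<and> g\<^sub>1 (u, y+s) - g\<^sub>1 (u, y) = (y + s - y) * g\<^sub>1\<^sub>2 (u, v)"
    by (rule MVT2) (use s u in \<open>auto intro!: has_partials_on_DERIV_snd[OF g\<^sub>1] inS\<close>)
  then obtain v where v: "y < v" "v < y + s" "g\<^sub>1 (u, y+s) - g\<^sub>1 (u, y) = s * g\<^sub>1\<^sub>2 (u, v)"
    by auto
  have "\<exists>v'. y < v' \<and> v' < y + s \<and>
      g (x+s, y+s) - g (x, y+s) - (g (x+s, y) - g (x, y)) = (y + s - y) * (g\<^sub>2 (x+s, v') - g\<^sub>2 (x, v'))"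
    by (rule MVT2) (use s in \<open>auto intro!: DERIV_diff has_partials_on_DERIV_snd[OF g] inS\<close>)
  then obtain v' where v': "y < v'" "v' < y + s" "\<Delta> = s * (g\<^sub>2 (x+s, v') - g\<^sub>2 (x, v'))"
    by (auto simp: \<Delta>_def algebra_simps)
  have "\<exists>u'. x < u' \<and> u' < x + s \<and> g\<^sub>2 (x+s, v') - g\<^sub>2 (x, v') = (x + s - x) * g\<^sub>2\<^sub>1 (u', v')"
    by (rule MVT2) (use s v' in \<open>auto intro!: has_partials_on_DERIV_fst[OF g\<^sub>2] inS\<close>)
  then obtain u' where u': "x < u'" "u' < x + s" "g\<^sub>2 (x+s, v') - g\<^sub>2 (x, v') = s * g\<^sub>2\<^sub>1 (u', v')"
    by auto
  have "\<Delta> = s * (s * g\<^sub>1\<^sub>2 (u, v))" using u(3) v(3) by simp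
  moreover have "\<Delta> = s * (s * g\<^sub>2\<^sub>1 (u', v'))" using v'(3) u'(3) by simp
  ultimately have "g\<^sub>1\<^sub>2 (u, v) = g\<^sub>2\<^sub>1 (u', v')" using s by auto
  then show ?thesis using u v u' v' by force
qed

lemma mixed_partials_eq:
  assumes "open S" "p \<in> S" and g: "has_partials_on S g g\<^sub>1 g\<^sub>2"
    and g\<^sub>1: "has_partials_on S g\<^sub>1 g\<^sub>1\<^sub>1 g\<^sub>1\<^sub>2" and g\<^sub>2: "has_partials_on S g\<^sub>2 g\<^sub>2\<^sub>1 g\<^sub>2\<^sub>2"
    and cont: "isCont g\<^sub>1\<^sub>2 p" "isCont g\<^sub>2\<^sub>1 p"
  shows "g\<^sub>1\<^sub>2 p = g\<^sub>2\<^sub>1 p"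
proof (rule ccontr)
  assume "g\<^sub>1\<^sub>2 p \<noteq> g\<^sub>2\<^sub>1 p"
  define e where "e = dist (g\<^sub>1\<^sub>2 p) (g\<^sub>2\<^sub>1 p) / 2"
  have "e > 0" using \<open>g\<^sub>1\<^sub>2 p \<noteq> g\<^sub>2\<^sub>1 p\<close> by (simp add: e_def)
  have "\<forall>\<^sub>F q in nhds p. q \<in> S \<and> dist (g\<^sub>1\<^sub>2 q) (g\<^sub>1\<^sub>2 p) < e \<and> dist (g\<^sub>2\<^sub>1 q) (g\<^sub>2\<^sub>1 p) < e"
    using cont \<open>e > 0\<close> \<open>open S\<close> \<open>p \<in> S\<close>
    by (intro eventually_conj eventually_nhds_in_open tendstoD)
      (auto simp: isCont_def tendsto_at_iff_tendsto_nhds)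
  then obtain r where "r > 0" and r: "\<And>q. dist q p < r \<Longrightarrow>
      q \<in> S \<and> dist (g\<^sub>1\<^sub>2 q) (g\<^sub>1\<^sub>2 p) < e \<and> dist (g\<^sub>2\<^sub>1 q) (g\<^sub>2\<^sub>1 p) < e"
    unfolding eventually_nhds_metric by blast
  define s where "s = r / 3"
  have near: "dist q p < r" if "q \<in> {fst p..fst p+s} \<times> {snd p..snd p+s}" for q
  proof -
    have "dist q p \<le> \<bar>fst q - fst p\<bar> + \<bar>snd q - snd p\<bar>"
      using sqrt_sum_squares_le_sum_abs[of "fst q - fst p" "snd q - snd p"]
      by (simp add: dist_prod_def dist_real_def)
    then show ?thesis using that \<open>r > 0\<close> by (auto simp: s_def)
  qed
  have "s > 0" using \<open>r > 0\<close> by (simp add: s_def)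
  then obtain a b where ab: "a \<in> {fst p..fst p+s} \<times> {snd p..snd p+s}"
      "b \<in> {fst p..fst p+s} \<times> {snd p..snd p+s}" "g\<^sub>1\<^sub>2 a = g\<^sub>2\<^sub>1 b"
    using mixed_partials_meet_on_square[OF g g\<^sub>1 g\<^sub>2] near r by blast
  then have "dist (g\<^sub>1\<^sub>2 a) (g\<^sub>1\<^sub>2 p) < e" "dist (g\<^sub>2\<^sub>1 b) (g\<^sub>2\<^sub>1 p) < e"
    using near r by blast+
  moreover have "dist (g\<^sub>1\<^sub>2 p) (g\<^sub>2\<^sub>1 p) \<le> dist (g\<^sub>1\<^sub>2 a) (g\<^sub>1\<^sub>2 p) + dist (g\<^sub>2\<^sub>1 b) (g\<^sub>2\<^sub>1 p)"
    using dist_triangle3[of "g\<^sub>1\<^sub>2 p" "g\<^sub>2\<^sub>1 p" "g\<^sub>1\<^sub>2 a"] ab(3) by simp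
  ultimately show False unfolding e_def by linarith
qed

section \<open>Twice differentiable functions in logarithmic coordinates\<close>

text \<open>A single mixed partial \<open>g\<^sub>1\<^sub>2\<close> serves as the second partial of \<open>g\<^sub>1\<close> and the first
  partial of \<open>g\<^sub>2\<close>: symmetry of the Hessian is part of the notion.\<close>

definition C2_partials_on ::
    "(real \<times> real) set \<Rightarrow> (real \<times> real \<Rightarrow> real) \<Rightarrow> (real \<times> real \<Rightarrow> real) \<Rightarrow> (real \<times> real \<Rightarrow> real)
      \<Rightarrow> (real \<times> real \<Rightarrow> real) \<Rightarrow> (real \<times> real \<Rightarrow> real) \<Rightarrow> (real \<times> real \<Rightarrow> real) \<Rightarrow> bool"
  where "C2_partials_on S g g\<^sub>1 g\<^sub>2 g\<^sub>1\<^sub>1 g\<^sub>1\<^sub>2 g\<^sub>2\<^sub>2 \<longleftrightarrow>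
    has_partials_on S g g\<^sub>1 g\<^sub>2 \<and> has_partials_on S g\<^sub>1 g\<^sub>1\<^sub>1 g\<^sub>1\<^sub>2 \<and> has_partials_on S g\<^sub>2 g\<^sub>1\<^sub>2 g\<^sub>2\<^sub>2 \<and>
    continuous_on S g\<^sub>1\<^sub>1 \<and> continuous_on S g\<^sub>1\<^sub>2 \<and> continuous_on S g\<^sub>2\<^sub>2"

lemma C2_on_imp_C2_partials_on:
  assumes "open S" "C2_on S g"
  shows "\<exists>g\<^sub>1 g\<^sub>2 g\<^sub>1\<^sub>1 g\<^sub>1\<^sub>2 g\<^sub>2\<^sub>2. C2_partials_on S g g\<^sub>1 g\<^sub>2 g\<^sub>1\<^sub>1 g\<^sub>1\<^sub>2 g\<^sub>2\<^sub>2"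
proof -
  obtain g' g'' where g': "\<And>p. p \<in> S \<Longrightarrow> (g has_derivative blinfun_apply (g' p)) (at p)"
    and g'': "\<And>p. p \<in> S \<Longrightarrow> (g' has_derivative blinfun_apply (g'' p)) (at p)"
    and cont: "continuous_on S g''"
    using assms(2) unfolding C2_on_def by blast
  define g\<^sub>1 g\<^sub>2 where "g\<^sub>1 p = g' p (1, 0)" and "g\<^sub>2 p = g' p (0, 1)" for p
  define g\<^sub>1\<^sub>1 g\<^sub>1\<^sub>2 g\<^sub>2\<^sub>1 g\<^sub>2\<^sub>2 where "g\<^sub>1\<^sub>1 p = g'' p (1, 0) (1, 0)" and "g\<^sub>1\<^sub>2 p = g'' p (0, 1) (1, 0)"
    and "g\<^sub>2\<^sub>1 p = g'' p (1, 0) (0, 1)" and "g\<^sub>2\<^sub>2 p = g'' p (0, 1) (0, 1)" for p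
  have g\<^sub>1': "(g\<^sub>1 has_derivative (\<lambda>h. g'' p h (1, 0))) (at p)" if "p \<in> S" for p
    unfolding g\<^sub>1_def by (rule bounded_linear.has_derivative[OF blinfun.bounded_linear_left g''[OF that]])
  have g\<^sub>1: "has_partials_on S g\<^sub>1 g\<^sub>1\<^sub>1 g\<^sub>1\<^sub>2"
    using has_derivative_real_pair_partials[OF g\<^sub>1'] by (simp add: has_partials_on_def g\<^sub>1\<^sub>1_def g\<^sub>1\<^sub>2_def)
  have g\<^sub>2': "(g\<^sub>2 has_derivative (\<lambda>h. g'' p h (0, 1))) (at p)" if "p \<in> S" for p
    unfolding g\<^sub>2_def by (rule bounded_linear.has_derivative[OF blinfun.bounded_linear_left g''[OF that]])
  have g\<^sub>2: "has_partials_on S g\<^sub>2 g\<^sub>2\<^sub>1 g\<^sub>2\<^sub>2"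
    using has_derivative_real_pair_partials[OF g\<^sub>2'] by (simp add: has_partials_on_def g\<^sub>2\<^sub>1_def g\<^sub>2\<^sub>2_def)
  have g: "has_partials_on S g g\<^sub>1 g\<^sub>2"
    using has_derivative_real_pair_partials[OF g'] by (simp add: has_partials_on_def g\<^sub>1_def g\<^sub>2_def)
  have cont2: "continuous_on S g\<^sub>1\<^sub>1" "continuous_on S g\<^sub>1\<^sub>2" "continuous_on S g\<^sub>2\<^sub>1" "continuous_on S g\<^sub>2\<^sub>2"
    unfolding g\<^sub>1\<^sub>1_def g\<^sub>1\<^sub>2_def g\<^sub>2\<^sub>1_def g\<^sub>2\<^sub>2_def by (intro continuous_intros cont)+
  have sym: "g\<^sub>1\<^sub>2 p = g\<^sub>2\<^sub>1 p" if "p \<in> S" for p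
    using mixed_partials_eq[OF assms(1) that g g\<^sub>1 g\<^sub>2] cont2(2,3) assms(1) that
    by (simp add: continuous_on_eq_continuous_at)
  have "has_partials_on S g\<^sub>2 g\<^sub>1\<^sub>2 g\<^sub>2\<^sub>2 \<longleftrightarrow> has_partials_on S g\<^sub>2 g\<^sub>2\<^sub>1 g\<^sub>2\<^sub>2"
    by (rule has_partials_on_cong) (simp_all add: sym)
  then show ?thesis using g g\<^sub>1 g\<^sub>2 cont2 unfolding C2_partials_on_def by blast
qed

lemma C2_partials_on_exp_coords:
  assumes "C2_partials_on {p. 0 < fst p \<and> 0 < snd p} g g\<^sub>1 g\<^sub>2 g\<^sub>1\<^sub>1 g\<^sub>1\<^sub>2 g\<^sub>2\<^sub>2"
  shows "\<exists>L\<^sub>1 L\<^sub>2 L\<^sub>1\<^sub>1 L\<^sub>1\<^sub>2 L\<^sub>2\<^sub>2. C2_partials_on UNIV (\<lambda>q. g (exp (fst q), exp (snd q))) L\<^sub>1 L\<^sub>2 L\<^sub>1\<^sub>1 L\<^sub>1\<^sub>2 L\<^sub>2\<^sub>2"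
proof -
  define Q where "Q = {p :: real \<times> real. 0 < fst p \<and> 0 < snd p}"
  define E where "E q = (exp (fst q), exp (snd q))" for q :: "real \<times> real"
  have E: "\<And>q. (exp (fst q), exp (snd q)) \<in> Q" by (simp add: Q_def)
  have g: "has_partials_on Q g g\<^sub>1 g\<^sub>2" and g\<^sub>1: "has_partials_on Q g\<^sub>1 g\<^sub>1\<^sub>1 g\<^sub>1\<^sub>2"
    and g\<^sub>2: "has_partials_on Q g\<^sub>2 g\<^sub>1\<^sub>2 g\<^sub>2\<^sub>2"
    and cont: "continuous_on Q g\<^sub>1\<^sub>1" "continuous_on Q g\<^sub>1\<^sub>2" "continuous_on Q g\<^sub>2\<^sub>2"
    using assms unfolding C2_partials_on_def Q_def by auto
  define L\<^sub>1\<^sub>1 where "L\<^sub>1\<^sub>1 q = exp (fst q) * g\<^sub>1 (E q) + exp (fst q) * exp (fst q) * g\<^sub>1\<^sub>1 (E q)" for q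
  define L\<^sub>1\<^sub>2 where "L\<^sub>1\<^sub>2 q = exp (fst q) * exp (snd q) * g\<^sub>1\<^sub>2 (E q)" for q
  define L\<^sub>2\<^sub>2 where "L\<^sub>2\<^sub>2 q = exp (snd q) * g\<^sub>2 (E q) + exp (snd q) * exp (snd q) * g\<^sub>2\<^sub>2 (E q)" for q
  have L: "has_partials_on UNIV (\<lambda>q. g (E q)) (\<lambda>q. exp (fst q) * g\<^sub>1 (E q)) (\<lambda>q. exp (snd q) * g\<^sub>2 (E q))"
    using has_partials_on_comp_exp[OF g E] by (simp add: E_def)
  have "has_partials_on UNIV (\<lambda>q. exp (fst q) * g\<^sub>1 (E q))
      (\<lambda>q. exp (fst q) * g\<^sub>1 (E q) + exp (fst q) * (exp (fst q) * g\<^sub>1\<^sub>1 (E q)))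
      (\<lambda>q. 0 * g\<^sub>1 (E q) + exp (fst q) * (exp (snd q) * g\<^sub>1\<^sub>2 (E q)))"
    using has_partials_on_mult[OF has_partials_on_exp_fst has_partials_on_comp_exp[OF g\<^sub>1 E]]
    by (simp add: E_def)
  then have L\<^sub>1: "has_partials_on UNIV (\<lambda>q. exp (fst q) * g\<^sub>1 (E q)) L\<^sub>1\<^sub>1 L\<^sub>1\<^sub>2"
    by (simp add: has_partials_on_def L\<^sub>1\<^sub>1_def L\<^sub>1\<^sub>2_def algebra_simps)
  have "has_partials_on UNIV (\<lambda>q. exp (snd q) * g\<^sub>2 (E q))
      (\<lambda>q. 0 * g\<^sub>2 (E q) + exp (snd q) * (exp (fst q) * g\<^sub>1\<^sub>2 (E q)))
      (\<lambda>q. exp (snd q) * g\<^sub>2 (E q) + exp (snd q) * (exp (snd q) * g\<^sub>2\<^sub>2 (E q)))"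
    using has_partials_on_mult[OF has_partials_on_exp_snd has_partials_on_comp_exp[OF g\<^sub>2 E]]
    by (simp add: E_def)
  then have L\<^sub>2: "has_partials_on UNIV (\<lambda>q. exp (snd q) * g\<^sub>2 (E q)) L\<^sub>1\<^sub>2 L\<^sub>2\<^sub>2"
    by (simp add: has_partials_on_def L\<^sub>1\<^sub>2_def L\<^sub>2\<^sub>2_def algebra_simps)
  have "continuous_on UNIV E" unfolding E_def by (intro continuous_intros)
  then have comp: "continuous_on UNIV (\<lambda>q. f (E q))" if "continuous_on Q f" for f :: "real \<times> real \<Rightarrow> real"
    by (rule continuous_on_compose2[OF that]) (auto simp: E_def Q_def)
  have "continuous_on UNIV L\<^sub>1\<^sub>1" "continuous_on UNIV L\<^sub>1\<^sub>2" "continuous_on UNIV L\<^sub>2\<^sub>2"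
    unfolding L\<^sub>1\<^sub>1_def L\<^sub>1\<^sub>2_def L\<^sub>2\<^sub>2_def
    by (intro continuous_intros comp cont has_partials_on_imp_continuous_on[OF g\<^sub>1]
        has_partials_on_imp_continuous_on[OF g\<^sub>2])+
  then show ?thesis using L L\<^sub>1 L\<^sub>2 unfolding C2_partials_on_def E_def by blast
qed

lemma C2_partials_on_Jlog_d2:
  assumes "C2_partials_on UNIV (\<lambda>q. Jlog J (fst q) (snd q)) L\<^sub>1 L\<^sub>2 L\<^sub>1\<^sub>1 L\<^sub>1\<^sub>2 L\<^sub>2\<^sub>2"
  shows "d2_mu_mu J \<mu> \<nu> = L\<^sub>1\<^sub>1 (\<mu>, \<nu>)" "d2_mu_nu J \<mu> \<nu> = L\<^sub>1\<^sub>2 (\<mu>, \<nu>)" "d2_nu_nu J \<mu> \<nu> = L\<^sub>2\<^sub>2 (\<mu>, \<nu>)"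
proof -
  have L: "has_partials_on UNIV (\<lambda>q. Jlog J (fst q) (snd q)) L\<^sub>1 L\<^sub>2"
    and L\<^sub>1: "has_partials_on UNIV L\<^sub>1 L\<^sub>1\<^sub>1 L\<^sub>1\<^sub>2" and L\<^sub>2: "has_partials_on UNIV L\<^sub>2 L\<^sub>1\<^sub>2 L\<^sub>2\<^sub>2"
    using assms unfolding C2_partials_on_def by auto
  have d\<^sub>1: "deriv (\<lambda>m. Jlog J m n) m = L\<^sub>1 (m, n)" for m n
    using has_partials_on_DERIV_fst[OF L, of m n] by (simp add: DERIV_imp_deriv)
  have d\<^sub>2: "deriv (\<lambda>n. Jlog J m n) n = L\<^sub>2 (m, n)" for m n
    using has_partials_on_DERIV_snd[OF L, of m n] by (simp add: DERIV_imp_deriv)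
  show "d2_mu_mu J \<mu> \<nu> = L\<^sub>1\<^sub>1 (\<mu>, \<nu>)"
    using has_partials_on_DERIV_fst[OF L\<^sub>1] by (simp add: d2_mu_mu_def d\<^sub>1 DERIV_imp_deriv)
  show "d2_mu_nu J \<mu> \<nu> = L\<^sub>1\<^sub>2 (\<mu>, \<nu>)"
    using has_partials_on_DERIV_snd[OF L\<^sub>1] by (simp add: d2_mu_nu_def d\<^sub>1 DERIV_imp_deriv)
  show "d2_nu_nu J \<mu> \<nu> = L\<^sub>2\<^sub>2 (\<mu>, \<nu>)"
    using has_partials_on_DERIV_snd[OF L\<^sub>2] by (simp add: d2_nu_nu_def d\<^sub>2 DERIV_imp_deriv)
qed

lemma C2_on_imp_Jlog_C2_partials:
  assumes "C2_on {p. 0 < fst p \<and> 0 < snd p} (\<lambda>p. J (fst p) (snd p))"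
  shows "\<exists>L\<^sub>1 L\<^sub>2. C2_partials_on UNIV (\<lambda>q. Jlog J (fst q) (snd q)) L\<^sub>1 L\<^sub>2
    (\<lambda>q. d2_mu_mu J (fst q) (snd q)) (\<lambda>q. d2_mu_nu J (fst q) (snd q)) (\<lambda>q. d2_nu_nu J (fst q) (snd q))"
proof -
  have "open {p :: real \<times> real. 0 < fst p \<and> 0 < snd p}"
    by (intro open_Collect_conj open_Collect_less continuous_intros)
  then obtain L\<^sub>1 L\<^sub>2 L\<^sub>1\<^sub>1 L\<^sub>1\<^sub>2 L\<^sub>2\<^sub>2 where L: "C2_partials_on UNIV (\<lambda>q. Jlog J (fst q) (snd q)) L\<^sub>1 L\<^sub>2 L\<^sub>1\<^sub>1 L\<^sub>1\<^sub>2 L\<^sub>2\<^sub>2"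
    using C2_on_imp_C2_partials_on[OF _ assms] C2_partials_on_exp_coords by (fastforce simp: Jlog_def)
  moreover have "L\<^sub>1\<^sub>1 = (\<lambda>q. d2_mu_mu J (fst q) (snd q))" "L\<^sub>1\<^sub>2 = (\<lambda>q. d2_mu_nu J (fst q) (snd q))"
    "L\<^sub>2\<^sub>2 = (\<lambda>q. d2_nu_nu J (fst q) (snd q))"
    using C2_partials_on_Jlog_d2[OF L] by auto
  ultimately show ?thesis by blast
qed

section \<open>Monotonicity of a level curve\<close>

lemma has_partials_on_segment_less:
  assumes H: "has_partials_on S H H\<^sub>1 H\<^sub>2" and seg: "closed_segment p q \<subseteq> S"
    and pos: "\<And>x. x \<in> closed_segment p q \<Longrightarrow> 0 < fst (q - p) * H\<^sub>1 x + snd (q - p) * H\<^sub>2 x"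
  shows "H p < H q"
proof -
  define \<gamma> where "\<gamma> s = ((1 - s) * fst p + s * fst q, (1 - s) * snd p + s * snd q)" for s
  have \<gamma>_seg: "\<gamma> s \<in> closed_segment p q" if "0 \<le> s" "s \<le> 1" for s
  proof -
    have "\<gamma> s = (1 - s) *\<^sub>R p + s *\<^sub>R q" by (simp add: \<gamma>_def prod_eq_iff)
    then show ?thesis using that unfolding closed_segment_def by blast
  qed
  have d: "((\<lambda>s. (1 - s) * fst p + s * fst q) has_real_derivative fst (q - p)) (at s)"
    "((\<lambda>s. (1 - s) * snd p + s * snd q) has_real_derivative snd (q - p)) (at s)" for s
    by (auto intro!: derivative_eq_intros)
  have deriv: "((\<lambda>s. H (\<gamma> s)) has_real_derivative fst (q - p) * H\<^sub>1 (\<gamma> s) + snd (q - p) * H\<^sub>2 (\<gamma> s)) (at s)"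
    if "0 \<le> s" "s \<le> 1" for s
  proof -
    have "\<gamma> s \<in> S" using \<gamma>_seg[OF that] seg by blast
    then show ?thesis unfolding \<gamma>_def by (rule has_partials_on_DERIV_comp[OF H _ d(1) d(2)])
  qed
  have "H (\<gamma> 0) < H (\<gamma> 1)"
  proof (rule DERIV_pos_imp_increasing[where f = "\<lambda>s. H (\<gamma> s)"])
    fix s :: real assume "0 \<le> s" "s \<le> 1"
    then show "\<exists>y. ((\<lambda>s. H (\<gamma> s)) has_real_derivative y) (at s) \<and> 0 < y"
      using deriv pos \<gamma>_seg by blast
  qed simp
  then show ?thesis by (simp add: \<gamma>_def)
qed

lemma level_set_locally_increasing:
  assumes H: "has_partials_on UNIV H H\<^sub>1 H\<^sub>2" and cont: "isCont H\<^sub>1 p" "isCont H\<^sub>2 p"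
    and signs: "0 < H\<^sub>1 p" "H\<^sub>2 p < 0"
  shows "\<exists>r>0. \<forall>q\<in>ball p r. H q = H p \<longrightarrow> fst p + snd p < fst q + snd q \<longrightarrow>
    fst p < fst q \<and> snd p < snd q"
proof -
  have "\<forall>\<^sub>F x in nhds p. 0 < H\<^sub>1 x \<and> H\<^sub>2 x < 0"
    using cont signs
    by (intro eventually_conj order_tendstoD) (auto simp: isCont_def tendsto_at_iff_tendsto_nhds)
  then obtain r where "r > 0" and "\<forall>x. dist x p < r \<longrightarrow> 0 < H\<^sub>1 x \<and> H\<^sub>2 x < 0"
    unfolding eventually_nhds_metric by blast
  then have r: "\<And>x. x \<in> ball p r \<Longrightarrow> 0 < H\<^sub>1 x \<and> H\<^sub>2 x < 0" by (metis dist_commute mem_ball)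
  have "fst p < fst q \<and> snd p < snd q"
    if q: "q \<in> ball p r" "H q = H p" "fst p + snd p < fst q + snd q" for q
  proof
    have "p \<in> ball p r" using \<open>r > 0\<close> by simp
    then have segs: "closed_segment p q \<subseteq> ball p r" "closed_segment q p \<subseteq> ball p r"
      using q(1) by (simp_all add: closed_segment_subset)
    show "fst p < fst q"
    proof (rule ccontr)
      assume "\<not> fst p < fst q"
      then have "0 \<le> fst (p - q)" "snd (p - q) < 0" using q(3) by auto
      then have "0 < fst (p - q) * H\<^sub>1 x + snd (p - q) * H\<^sub>2 x" if "x \<in> closed_segment q p" for x
        using r[of x] segs(2) that by (intro add_nonneg_pos mult_nonneg_nonneg mult_neg_neg) auto
      then have "H q < H p" by (rule has_partials_on_segment_less[OF H subset_UNIV])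
      then show False using q(2) by simp
    qed
    show "snd p < snd q"
    proof (rule ccontr)
      assume "\<not> snd p < snd q"
      then have "0 < fst (q - p)" "snd (q - p) \<le> 0" using q(3) by auto
      then have "0 < fst (q - p) * H\<^sub>1 x + snd (q - p) * H\<^sub>2 x" if "x \<in> closed_segment p q" for x
        using r[of x] segs(1) that by (intro add_pos_nonneg mult_pos_pos mult_nonpos_nonpos) auto
      then have "H p < H q" by (rule has_partials_on_segment_less[OF H subset_UNIV])
      then show False using q(2) by simp
    qed
  qed
  then show ?thesis using \<open>r > 0\<close> by blast
qed

lemma strict_mono_on_if_locally_right_increasing:
  fixes g :: "real \<Rightarrow> real"
  assumes I: "is_interval I" and cont: "continuous_on I g"
    and local: "\<And>x. x \<in> I \<Longrightarrow> \<exists>\<delta>>0. \<forall>y\<in>I. x < y \<and> y < x + \<delta> \<longrightarrow> g x < g y"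
  shows "strict_mono_on I g"
proof (rule strict_mono_onI)
  fix a b assume ab: "a \<in> I" "b \<in> I" "a < b"
  have sub: "{a..b} \<subseteq> I" using mem_is_interval_1_I[OF I ab(1,2)] by auto
  have right: "\<exists>y\<in>{x<..b}. g x < g y" if "a \<le> x" "x < b" for x
  proof -
    have "x \<in> I" using sub that by auto
    then obtain \<delta> where "\<delta> > 0" and \<delta>: "\<And>y. y \<in> I \<Longrightarrow> x < y \<Longrightarrow> y < x + \<delta> \<Longrightarrow> g x < g y"
      using local by blast
    then show ?thesis using sub that by (intro bexI[of _ "min (x + \<delta> / 2) b"] \<delta>) auto
  qed
  obtain c where c: "c \<in> {a..b}" and max: "\<And>y. y \<in> {a..b} \<Longrightarrow> g y \<le> g c"
    using continuous_attains_sup[OF compact_Icc _ continuous_on_subset[OF cont sub]] ab(3) by auto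
  have "c = b"
  proof (rule ccontr)
    assume "c \<noteq> b"
    then obtain y where "y \<in> {c<..b}" "g c < g y" using right c by fastforce
    then show False using max[of y] c by auto
  qed
  obtain y where "y \<in> {a<..b}" "g a < g y" using right ab(3) by blast
  then show "g a < g b" using max[of y] \<open>c = b\<close> by auto
qed

lemma level_curve_strict_mono:
  fixes H H\<^sub>1 H\<^sub>2 :: "real \<times> real \<Rightarrow> real" and p :: "real \<Rightarrow> real \<times> real"
  assumes H: "has_partials_on UNIV H H\<^sub>1 H\<^sub>2" "continuous_on UNIV H\<^sub>1" "continuous_on UNIV H\<^sub>2"
    and I: "open I" "is_interval I" and p: "continuous_on I p"
    and level: "\<And>T. T \<in> I \<Longrightarrow> H (p T) = 0"
    and sum: "strict_mono_on I (\<lambda>T. fst (p T) + snd (p T))"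
    and signs: "\<And>T. T \<in> I \<Longrightarrow> 0 < H\<^sub>1 (p T)" "\<And>T. T \<in> I \<Longrightarrow> H\<^sub>2 (p T) < 0"
  shows "strict_mono_on I (\<lambda>T. fst (p T))" "strict_mono_on I (\<lambda>T. snd (p T))"
proof -
  have local: "\<exists>\<delta>>0. \<forall>T\<in>I. T\<^sub>0 < T \<and> T < T\<^sub>0 + \<delta> \<longrightarrow> fst (p T\<^sub>0) < fst (p T) \<and> snd (p T\<^sub>0) < snd (p T)"
    if T\<^sub>0: "T\<^sub>0 \<in> I" for T\<^sub>0
  proof -
    have "isCont H\<^sub>1 (p T\<^sub>0)" "isCont H\<^sub>2 (p T\<^sub>0)"
      using H(2,3) continuous_on_eq_continuous_at[OF open_UNIV] by blast+
    then obtain r where "r > 0" and r: "\<And>q. q \<in> ball (p T\<^sub>0) r \<Longrightarrow> H q = H (p T\<^sub>0) \<Longrightarrow>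
        fst (p T\<^sub>0) + snd (p T\<^sub>0) < fst q + snd q \<Longrightarrow> fst (p T\<^sub>0) < fst q \<and> snd (p T\<^sub>0) < snd q"
      using level_set_locally_increasing[OF H(1)] signs[OF T\<^sub>0] by blast
    have "isCont p T\<^sub>0" using p I(1) T\<^sub>0 continuous_on_eq_continuous_at by blast
    then obtain \<delta> where "\<delta> > 0" and \<delta>: "\<And>T. dist T T\<^sub>0 < \<delta> \<Longrightarrow> dist (p T) (p T\<^sub>0) < r"
      using \<open>r > 0\<close> unfolding continuous_at_eps_delta by blast
    have "fst (p T\<^sub>0) < fst (p T) \<and> snd (p T\<^sub>0) < snd (p T)"
      if "T \<in> I" "T\<^sub>0 < T" "T < T\<^sub>0 + \<delta>" for T
    proof (rule r)
      show "p T \<in> ball (p T\<^sub>0) r" using \<delta>[of T] that by (simp add: dist_real_def dist_commute)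
      show "H (p T) = H (p T\<^sub>0)" using level T\<^sub>0 that(1) by simp
      show "fst (p T\<^sub>0) + snd (p T\<^sub>0) < fst (p T) + snd (p T)"
        using strict_mono_onD[OF sum T\<^sub>0 that(1,2)] .
    qed
    then show ?thesis using \<open>\<delta> > 0\<close> by blast
  qed
  have cont: "continuous_on I (\<lambda>T. fst (p T))" "continuous_on I (\<lambda>T. snd (p T))"
    using p by (auto intro: continuous_on_fst continuous_on_snd)
  show "strict_mono_on I (\<lambda>T. fst (p T))"
    using cont(1) by (rule strict_mono_on_if_locally_right_increasing[OF I(2)]) (use local in blast)
  show "strict_mono_on I (\<lambda>T. snd (p T))"
    using cont(2) by (rule strict_mono_on_if_locally_right_increasing[OF I(2)]) (use local in blast)
qed

section \<open>Stationarity of the constrained minimizer\<close>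

lemma stationary_if_local_min_on_antidiagonal:
  assumes L: "has_partials_on UNIV L L\<^sub>1 L\<^sub>2" and "d > 0"
    and min: "\<And>\<mu>. \<bar>fst p - \<mu>\<bar> < d \<Longrightarrow> L p \<le> L (\<mu>, fst p + snd p - \<mu>)"
  shows "L\<^sub>1 p = L\<^sub>2 p"
proof -
  have "((\<lambda>\<mu>. L (\<mu>, fst p + snd p - \<mu>)) has_real_derivative
      1 * L\<^sub>1 (fst p, fst p + snd p - fst p) + (- 1) * L\<^sub>2 (fst p, fst p + snd p - fst p)) (at (fst p))"
    by (rule has_partials_on_DERIV_comp[OF L]) (auto intro!: derivative_eq_intros)
  then have "((\<lambda>\<mu>. L (\<mu>, fst p + snd p - \<mu>)) has_real_derivative L\<^sub>1 p - L\<^sub>2 p) (at (fst p))"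
    by simp
  moreover have "\<forall>\<mu>. \<bar>fst p - \<mu>\<bar> < d \<longrightarrow> L (fst p, fst p + snd p - fst p) \<le> L (\<mu>, fst p + snd p - \<mu>)"
    using min by simp
  ultimately have "L\<^sub>1 p - L\<^sub>2 p = 0" using \<open>d > 0\<close> DERIV_local_min by blast
  then show ?thesis by simp
qed

lemma constrained_minimizer_stationary:
  assumes L: "has_partials_on UNIV (\<lambda>q. Jlog J (fst q) (snd q)) L\<^sub>1 L\<^sub>2"
    and "0 < \<D>" "0 < N" "2 * \<D> < D"
    and min: "\<And>N' D'. 0 < N' \<Longrightarrow> 2 * \<D> \<le> D' \<Longrightarrow> N' * D' = N * D \<Longrightarrow> (N', D') \<noteq> (N, D) \<Longrightarrow>
      J N D < J N' D'"
  shows "L\<^sub>1 (ln N, ln D) = L\<^sub>2 (ln N, ln D)"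
proof (rule stationary_if_local_min_on_antidiagonal[OF L])
  show "0 < ln D - ln (2 * \<D>)" using assms(2,4) by simp
  fix \<mu> assume \<mu>: "\<bar>fst (ln N, ln D) - \<mu>\<bar> < ln D - ln (2 * \<D>)"
  define D' where "D' = exp (ln N + ln D - \<mu>)"
  have "ln (2 * \<D>) < ln N + ln D - \<mu>" using \<mu> by (simp add: abs_less_iff)
  then have "exp (ln (2 * \<D>)) < D'" unfolding D'_def by simp
  then have "2 * \<D> < D'" using \<open>0 < \<D>\<close> by simp
  moreover have "exp \<mu> * D' = exp (ln N + ln D)" by (simp add: D'_def exp_add[symmetric])
  then have "exp \<mu> * D' = N * D" using assms(2-4) by (simp add: exp_add)
  ultimately have "J N D \<le> J (exp \<mu>) D'"
    using min[of "exp \<mu>" D'] by (cases "(exp \<mu>, D') = (N, D)") auto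
  then show "Jlog J (fst (ln N, ln D)) (snd (ln N, ln D)) \<le>
      Jlog J (fst (\<mu>, fst (ln N, ln D) + snd (ln N, ln D) - \<mu>)) (snd (\<mu>, fst (ln N, ln D) + snd (ln N, ln D) - \<mu>))"
    using assms(2-4) by (simp add: Jlog_def D'_def)
qed

theorem mainTheorem10:
  fixes J :: "real \<Rightarrow> real \<Rightarrow> real"
    and \<D> :: real
    and I :: "real set"
    and Nstar Dstar :: "real \<Rightarrow> real"
  assumes Dpos: "\<D> > 0"
    and C2: "C2_on {p. fst p > 0 \<and> snd p > 0} (\<lambda>p. J (fst p) (snd p))"
    and I_open: "open I" and I_interval: "is_interval I" and I_pos: "I \<subseteq> {0<..}"
    and feasible: "\<forall>T\<in>I. Nstar T > 0 \<and> Dstar T > 2 * \<D> \<and> Nstar T * Dstar T = T"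
    and unique_min: "\<forall>T\<in>I. \<forall>N D. N > 0 \<longrightarrow> D \<ge> 2 * \<D> \<longrightarrow> N * D = T \<longrightarrow>
                        (N, D) \<noteq> (Nstar T, Dstar T) \<longrightarrow> J (Nstar T) (Dstar T) < J N D"
    and cont_N: "continuous_on I Nstar" and cont_D: "continuous_on I Dstar"
    and mixed: "\<forall>T\<in>I. d2_mu_nu J (ln (Nstar T)) (ln (Dstar T)) \<le> 0"
    and convex_mu: "\<forall>T\<in>I. d2_mu_mu J (ln (Nstar T)) (ln (Dstar T)) > 0"
    and convex_nu: "\<forall>T\<in>I. d2_nu_nu J (ln (Nstar T)) (ln (Dstar T)) > 0"
  shows "\<forall>T1\<in>I. \<forall>T2\<in>I. T1 < T2 \<longrightarrow> Nstar T2 > Nstar T1 \<and> Dstar T2 > Dstar T1"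
proof -
  obtain L\<^sub>1 L\<^sub>2 where L: "C2_partials_on UNIV (\<lambda>q. Jlog J (fst q) (snd q)) L\<^sub>1 L\<^sub>2
      (\<lambda>q. d2_mu_mu J (fst q) (snd q)) (\<lambda>q. d2_mu_nu J (fst q) (snd q)) (\<lambda>q. d2_nu_nu J (fst q) (snd q))"
    using C2_on_imp_Jlog_C2_partials[OF C2] by blast
  have H: "has_partials_on UNIV (\<lambda>q. L\<^sub>1 q - L\<^sub>2 q)
      (\<lambda>q. d2_mu_mu J (fst q) (snd q) - d2_mu_nu J (fst q) (snd q))
      (\<lambda>q. d2_mu_nu J (fst q) (snd q) - d2_nu_nu J (fst q) (snd q))"
    and H_cont: "continuous_on UNIV (\<lambda>q. d2_mu_mu J (fst q) (snd q) - d2_mu_nu J (fst q) (snd q))"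
      "continuous_on UNIV (\<lambda>q. d2_mu_nu J (fst q) (snd q) - d2_nu_nu J (fst q) (snd q))"
    using L unfolding C2_partials_on_def by (auto intro: has_partials_on_diff continuous_on_diff)
  define p where "p T = (ln (Nstar T), ln (Dstar T))" for T
  have pos: "0 < Nstar T" "0 < Dstar T" if "T \<in> I" for T using feasible Dpos that by auto
  have "continuous_on I p"
    unfolding p_def by (intro continuous_intros cont_N cont_D) (use pos in fastforce)+
  moreover have "L\<^sub>1 (p T) - L\<^sub>2 (p T) = 0" if "T \<in> I" for T
    using constrained_minimizer_stationary[of J L\<^sub>1 L\<^sub>2 \<D> "Nstar T" "Dstar T"] L unique_min feasible Dpos that
    by (auto simp: p_def C2_partials_on_def)
  moreover have "fst (p T) + snd (p T) = ln T" if "T \<in> I" for T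
  proof -
    have "ln T = ln (Nstar T * Dstar T)" using feasible that by simp
    then show ?thesis using pos[OF that] by (simp add: p_def ln_mult)
  qed
  then have "strict_mono_on I (\<lambda>T. fst (p T) + snd (p T))"
    using I_pos by (auto intro!: strict_mono_onI)
  moreover have "0 < d2_mu_mu J (fst (p T)) (snd (p T)) - d2_mu_nu J (fst (p T)) (snd (p T))"
    "d2_mu_nu J (fst (p T)) (snd (p T)) - d2_nu_nu J (fst (p T)) (snd (p T)) < 0" if "T \<in> I" for T
    using mixed convex_mu convex_nu that by (auto simp: p_def dest!: bspec[of I _ T])
  ultimately have "strict_mono_on I (\<lambda>T. fst (p T))" "strict_mono_on I (\<lambda>T. snd (p T))"
    using level_curve_strict_mono[OF H H_cont I_open I_interval] by blast+
  then show ?thesis using pos by (auto simp: p_def strict_mono_on_def)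
qed

end
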